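(* Assume the Standing Setup. Let $n\ge1$, let $\vec A$ be a time-dependent vector field in $\mathcal F$ which is $n$-admissible for $\mathcal G$, let $\vec\Delta\in H^0(X,\mathcal F)$ with $\vec\Delta|_Y\in H^0(Y,\mathcal G)$, and let $\vec E\in H^0(X,\mathcal F)$ be any time-independent vector field. Set $\vec B:=\vec A+\frac{t^n}{n!}\vec\Delta+\frac{t^{n+1}}{(n+1)!}\vec E$. Then for all $1\le m\le n$, $$\mathcal L^m_{D(\vec B)}\vec B\equiv \mathcal L^m_{D(\vec A)}\vec A+\tfrac{t^{n-m}}{(n-m)!}\vec\Delta \pmod{t^{n-m+1}},$$ and $$\mathcal L^{n+1}_{D(\vec B)}\vec B\equiv\mathcal L^{n+1}_{D(\vec A)}\vec A+\vec E+n[\vec A,\vec\Delta]\pmod{t}.$$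
   Context: Standing Setup: $X$ is a complex manifold, $\mathcal F\subseteq T_X$ a Lie-closed subsheaf of $\mathbb C_X$-modules ($\mathbb C_X$ = locally constant functions), $Y\subseteq X$ a reduced complex subspace with inclusion $f$, $\mathcal F_Y:=\operatorname{Im}(f^{-1}\mathcal F\to f^*T_X)$, $\mathcal G\subseteq\mathcal F_Y$ an obstruction sheaf for $\mathcal F$ (for every open $U\subseteq X$ and $\vec A_1,\vec A_2\in\mathcal F(U)$ with $f^*\vec A_1=f^*\vec A_2$ on $f^{-1}(U)$, $f^*[\vec A_1,\vec A_2]\in\mathcal G(f^{-1}(U))$). A time-dependent vector field is a section of $p_X^*T_X$ over $X\times\mathbb C$ ($t$ the coordinate of $\mathbb C$, $p_X$ the projection), viewed inside $T_{X\times\mathbb C}$; it is in $\mathcal F$ if it equals $\sum_{i=0}^N t^i\vec A_i$ with $\vec A_i\in H^0(X,\mathcal F)$; time-independent fields on $X$ are regarded as time-dependent via pull-back. $\vec A_0|_Y$ denotes the image in $H^0(Y,f^*T_X)$ of the restriction to time $0$. $D(\vec A):=\partial/\partial t+\vec A$, $\mathcal L_{\vec V}\vec W:=[\vec V,\vec W]$ on $X\times\mathbb C$, $\mathcal L^m$ its $m$-fold iterate. $\vec A$ is $n$-admissible for $\mathcal G$ if $(\mathcal L^m_{D(\vec A)}\vec A)_0|_Y\in H^0(Y,\mathcal G)$ for $1\le m\le n$. For time-dependent fields $\vec V,\vec W$, $\vec V\equiv\vec W\pmod{t^k}$ means $\vec V-\vec W=t^k\vec U$ for some time-dependent vector field $\vec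 U$. *)

theory Defs
  imports Main "HOL.Vector_Spaces" "HOL.Complex"
begin

text \<open>Abstract model. 'v plays the role of the complex Lie algebra of global
holomorphic vector fields on X (with scalar multiplication sc and Lie bracket br).
A time-dependent vector field that is polynomial in t is recorded by its sequence
of t-coefficients (nat => 'v): P k is the coefficient of t^k.\<close>

definition is_lie_bracket :: "(complex \<Rightarrow> 'v::ab_group_add \<Rightarrow> 'v) \<Rightarrow> ('v \<Rightarrow> 'v \<Rightarrow> 'v) \<Rightarrow> bool" where
  "is_lie_bracket sc br \<longleftrightarrow>
     (\<forall>x y z. br (x + y) z = br x z + br y z) \<and>
     (\<forall>x y z. br x (y + z) = br x y + br x z) \<and>
     (\<forall>c x y. br (sc c x) y = sc c (br x y)) \<and>
     (\<forall>c x y. br x (sc c y) = sc c (br x y)) \<and>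
     (\<forall>x. br x x = 0) \<and>
     (\<forall>x y z. br x (br y z) + br y (br z x) + br z (br x y) = 0)"

text \<open>Bracket on X x C of two time-dependent fields (no d/dt component):
[sum t^i A_i, sum t^j B_j] = sum t^(i+j) [A_i,B_j].\<close>
definition td_bracket :: "('v \<Rightarrow> 'v \<Rightarrow> 'v::comm_monoid_add) \<Rightarrow> (nat \<Rightarrow> 'v) \<Rightarrow> (nat \<Rightarrow> 'v) \<Rightarrow> nat \<Rightarrow> 'v" where
  "td_bracket br P Q = (\<lambda>k. \<Sum>i\<le>k. br (P i) (Q (k - i)))"

text \<open>[d/dt, W] = dW/dt.\<close>
definition td_dt :: "(complex \<Rightarrow> 'v \<Rightarrow> 'v) \<Rightarrow> (nat \<Rightarrow> 'v) \<Rightarrow> nat \<Rightarrow> 'v" where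
  "td_dt sc P = (\<lambda>k. sc (of_nat (Suc k)) (P (Suc k)))"

text \<open>L_{D(A)} W = [d/dt + A, W].\<close>
definition lie_D :: "(complex \<Rightarrow> 'v \<Rightarrow> 'v) \<Rightarrow> ('v \<Rightarrow> 'v \<Rightarrow> 'v::comm_monoid_add) \<Rightarrow> (nat \<Rightarrow> 'v) \<Rightarrow> (nat \<Rightarrow> 'v) \<Rightarrow> nat \<Rightarrow> 'v" where
  "lie_D sc br A W = (\<lambda>k. td_dt sc W k + td_bracket br A W k)"

definition lie_iter :: "(complex \<Rightarrow> 'v \<Rightarrow> 'v) \<Rightarrow> ('v \<Rightarrow> 'v \<Rightarrow> 'v::comm_monoid_add) \<Rightarrow> (nat \<Rightarrow> 'v) \<Rightarrow> nat \<Rightarrow> nat \<Rightarrow> 'v" where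
  "lie_iter sc br A m = ((lie_D sc br A) ^^ m) A"

definition const_td :: "'v \<Rightarrow> nat \<Rightarrow> 'v::zero" where
  "const_td V = (\<lambda>k. if k = 0 then V else 0)"

text \<open>P == Q (mod t^k): P - Q = t^k U, i.e. coefficients of t^j, j < k, agree.\<close>
definition cong_mod_t :: "nat \<Rightarrow> (nat \<Rightarrow> 'v) \<Rightarrow> (nat \<Rightarrow> 'v) \<Rightarrow> bool" where
  "cong_mod_t k P Q \<longleftrightarrow> (\<forall>j<k. P j = Q j)"

text \<open>Time-dependent field in F: sum_{i=0}^N t^i A_i with A_i in H^0(X,F).\<close>
definition td_in_F :: "'v set \<Rightarrow> (nat \<Rightarrow> 'v::zero) \<Rightarrow> bool" where
  "td_in_F F P \<longleftrightarrow> (\<exists>N. \<forall>i>N. P i = 0) \<and> (\<forall>i. P i \<in> F)"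

text \<open>n-admissible for G: (L^m_{D(A)} A)_0|_Y in H^0(Y,G) for 1 <= m <= n.\<close>
definition admissible :: "(complex \<Rightarrow> 'v \<Rightarrow> 'v) \<Rightarrow> ('v \<Rightarrow> 'v \<Rightarrow> 'v::comm_monoid_add) \<Rightarrow> ('v \<Rightarrow> 'w) \<Rightarrow> 'w set \<Rightarrow> nat \<Rightarrow> (nat \<Rightarrow> 'v) \<Rightarrow> bool" where
  "admissible sc br res G n A \<longleftrightarrow> (\<forall>m. 1 \<le> m \<and> m \<le> n \<longrightarrow> res (lie_iter sc br A m 0) \<in> G)"

end

theory Submission
  imports Defs
begin

text \<open>Let D_m := L^m_{D(B)} B - L^m_{D(A)} A. Since B agrees with A in degrees below n,
  bilinearity gives, for k < n, the recurrence
  (D_{m+1})_k = (k+1) (D_m)_{k+1} + \<Sum>_{i\<le>k} [A_i, (D_m)_{k-i}].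
  The t-derivative moves the leading term t^{n-m} \<Delta>/(n-m)! of D_m down one degree per step,
  while the bracket with A_0 adds one more copy of [A_0, \<Delta>] to the coefficient just above it;
  after n+1 steps the constant term is E + n [A_0, \<Delta>].\<close>

lemma lie_iter_Suc:
  "lie_iter sc br P (Suc m) k
     = sc (of_nat (Suc k)) (lie_iter sc br P m (Suc k)) + td_bracket br P (lie_iter sc br P m) k"
  by (simp add: lie_iter_def lie_D_def td_dt_def)

lemma of_nat_Suc_mult_inverse_fact:
  "(of_nat (Suc k) :: 'a::field_char_0) * inverse (fact (Suc k)) = inverse (fact k)"
  by (simp add: field_simps del: of_nat_Suc)

locale lie_algebra = vector_space scale
  for scale :: "complex \<Rightarrow> 'v::ab_group_add \<Rightarrow> 'v" (infixr \<open>*s\<close> 75) +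
  fixes br :: "'v \<Rightarrow> 'v \<Rightarrow> 'v"
  assumes is_lie_bracket: "is_lie_bracket scale br"
begin

lemma br_add_left: "br (x + y) z = br x z + br y z"
  and br_add_right: "br x (y + z) = br x y + br x z"
  and br_scale_right: "br x (c *s y) = c *s br x y"
  and br_self: "br x x = 0"
  using is_lie_bracket unfolding is_lie_bracket_def by auto

lemma br_zero_right [simp]: "br x 0 = 0"
  using br_add_right[of x 0 0] by simp

lemma br_diff_right: "br x (y - z) = br x y - br x z"
  using br_add_right[of x "y - z" z] by (simp add: algebra_simps)

lemma br_anticomm: "br y x = - br x y"
proof -
  have "br x y + br y x = br (x + y) (x + y)"
    unfolding br_add_left br_add_right by (simp add: br_self)
  then show ?thesis
    by (simp add: br_self eq_neg_iff_add_eq_0 add.commute)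
qed

lemma td_bracket_self: "td_bracket br P P k = 0"
proof -
  define S where "S = td_bracket br P P k"
  have "S = (\<Sum>i=0..k. br (P (k - i)) (P (k - (k - i))))"
    unfolding S_def td_bracket_def atLeast0AtMost[symmetric]
    using sum.atLeastAtMost_rev[of "\<lambda>i. br (P i) (P (k - i))" 0 k] by simp
  also have "\<dots> = (\<Sum>i=0..k. - br (P i) (P (k - i)))"
    by (intro sum.cong refl) (metis br_anticomm diff_diff_cancel atLeastAtMost_iff)
  also have "\<dots> = - S"
    unfolding S_def td_bracket_def atLeast0AtMost[symmetric] by (simp add: sum_negf)
  finally have "S + S = 0"
    by (simp add: eq_neg_iff_add_eq_0)
  then have "2 *s S = 0"
    using scale_left_distrib[of 1 1 S] by simp
  then show ?thesis
    by (simp add: S_def)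
qed

abbreviation iter :: "(nat \<Rightarrow> 'v) \<Rightarrow> nat \<Rightarrow> nat \<Rightarrow> 'v" where
  "iter \<equiv> lie_iter scale br"

lemma lie_iter_1: "iter P 1 k = of_nat (Suc k) *s P (Suc k)"
  using lie_iter_Suc[of scale br P 0 k] td_bracket_self[of P k] by (simp add: lie_iter_def)

lemma lie_iter_diff_Suc:
  assumes "\<And>i. i \<le> k \<Longrightarrow> B i = A i"
  shows "iter B (Suc m) k - iter A (Suc m) k
    = of_nat (Suc k) *s (iter B m (Suc k) - iter A m (Suc k))
      + (\<Sum>i\<le>k. br (A i) (iter B m (k - i) - iter A m (k - i)))"
proof -
  have "td_bracket br B (iter B m) k = (\<Sum>i\<le>k. br (A i) (iter B m (k - i)))"
    unfolding td_bracket_def using assms by (intro sum.cong) auto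
  then show ?thesis
    unfolding lie_iter_Suc td_bracket_def
    by (simp add: scale_right_diff_distrib br_diff_right sum_subtractf algebra_simps)
qed

lemma scale_of_nat_pred_add:
  assumes "1 \<le> m"
  shows "of_nat (m - 1) *s x + x = of_nat m *s x"
  using assms scale_left_distrib[of "of_nat (m - 1)" 1 x] by (simp add: of_nat_diff)

lemma lie_iter_perturb_low_coeffs:
  assumes below: "\<And>i. i < n \<Longrightarrow> B i = A i"
    and at_n: "B n = A n + inverse (fact n) *s \<Delta>"
    and at_Suc_n: "B (Suc n) = A (Suc n) + inverse (fact (Suc n)) *s E"
    and m: "1 \<le> m" "m \<le> n"
  shows "(\<forall>k < n - m. iter B m k = iter A m k)
    \<and> iter B m (n - m) = iter A m (n - m) + inverse (fact (n - m)) *s \<Delta>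
    \<and> iter B m (Suc (n - m)) = iter A m (Suc (n - m))
          + inverse (fact (Suc (n - m))) *s (E + of_nat (m - 1) *s br (A 0) \<Delta>)"
  using m
proof (induction m rule: nat_induct_at_least)
  case base
  then obtain p where n: "n = Suc p" by (cases n) auto
  have "\<forall>k < n - 1. iter B 1 k = iter A 1 k"
    unfolding lie_iter_1 using below by simp
  moreover have "iter B 1 (n - 1) = iter A 1 (n - 1) + inverse (fact (n - 1)) *s \<Delta>"
    unfolding lie_iter_1 using at_n of_nat_Suc_mult_inverse_fact[of p, where 'a=complex]
    by (simp add: n scale_right_distrib del: of_nat_Suc fact_Suc)
  moreover have "iter B 1 (Suc (n - 1)) = iter A 1 (Suc (n - 1)) + inverse (fact (Suc (n - 1))) *s E"
    unfolding lie_iter_1 using at_Suc_n of_nat_Suc_mult_inverse_fact[of n, where 'a=complex]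
    by (simp add: n scale_right_distrib del: of_nat_Suc fact_Suc)
  ultimately show ?case by simp
next
  case (Suc m)
  define D where "D k = iter B m k - iter A m k" for k
  define p where "p = n - Suc m"
  have n_m: "n - m = Suc p" and p_n: "Suc p < n"
    using Suc.hyps Suc.prems by (auto simp: p_def)
  from Suc.IH Suc.prems have IH:
    "\<forall>k < Suc p. D k = 0" "D (Suc p) = inverse (fact (Suc p)) *s \<Delta>"
    "D (Suc (Suc p)) = inverse (fact (Suc (Suc p))) *s (E + of_nat (m - 1) *s br (A 0) \<Delta>)"
    by (auto simp: D_def n_m)
  have step: "iter B (Suc m) k - iter A (Suc m) k
      = of_nat (Suc k) *s D (Suc k) + (\<Sum>i\<le>k. br (A i) (D (k - i)))" if "k \<le> Suc p" for k
    unfolding D_def using that p_n by (intro lie_iter_diff_Suc below) simp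
  have low_sum: "(\<Sum>i\<le>k. br (A i) (D (k - i))) = 0" if "k \<le> p" for k
    using IH(1) that by (intro sum.neutral) auto
  have "iter B (Suc m) k = iter A (Suc m) k" if "k < p" for k
    using step[of k] low_sum[of k] IH(1) that by simp
  moreover have "iter B (Suc m) p = iter A (Suc m) p + inverse (fact p) *s \<Delta>"
    using step[of p] low_sum[of p] IH(2) of_nat_Suc_mult_inverse_fact[of p, where 'a=complex]
    by (simp add: algebra_simps del: of_nat_Suc fact_Suc)
  moreover have "iter B (Suc m) (Suc p) = iter A (Suc m) (Suc p)
      + inverse (fact (Suc p)) *s (E + of_nat m *s br (A 0) \<Delta>)"
  proof -
    have "(\<Sum>i\<le>Suc p. br (A i) (D (Suc p - i))) = br (A 0) (D (Suc p))"
      using IH(1) by (simp add: sum.atMost_Suc_shift del: sum.atMost_Suc)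
    then have "iter B (Suc m) (Suc p) - iter A (Suc m) (Suc p)
        = inverse (fact (Suc p)) *s (E + (of_nat (m - 1) *s br (A 0) \<Delta> + br (A 0) \<Delta>))"
      using step[of "Suc p"] IH(2,3) of_nat_Suc_mult_inverse_fact[of "Suc p", where 'a=complex]
      by (simp add: br_scale_right scale_right_distrib del: of_nat_Suc fact_Suc)
    also have "of_nat (m - 1) *s br (A 0) \<Delta> + br (A 0) \<Delta> = of_nat m *s br (A 0) \<Delta>"
      using Suc.hyps by (rule scale_of_nat_pred_add)
    finally show ?thesis
      by (simp add: algebra_simps)
  qed
  ultimately show ?case
    by (simp add: p_def Suc_diff_Suc Suc.prems)
qed

lemma lie_iter_perturb_const_coeff:
  assumes below: "\<And>i. i < n \<Longrightarrow> B i = A i"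
    and at_n: "B n = A n + inverse (fact n) *s \<Delta>"
    and at_Suc_n: "B (Suc n) = A (Suc n) + inverse (fact (Suc n)) *s E"
    and n: "1 \<le> n"
  shows "iter B (Suc n) 0 = iter A (Suc n) 0 + E + of_nat n *s br (A 0) \<Delta>"
proof -
  have "iter B n 0 = iter A n 0 + \<Delta>"
    and "iter B n 1 = iter A n 1 + (E + of_nat (n - 1) *s br (A 0) \<Delta>)"
    using lie_iter_perturb_low_coeffs[OF below at_n at_Suc_n n order_refl] by simp_all
  moreover have "iter B (Suc n) 0 - iter A (Suc n) 0
      = (iter B n 1 - iter A n 1) + br (A 0) (iter B n 0 - iter A n 0)"
    using lie_iter_diff_Suc[of 0 B A n] below n by simp
  moreover have "of_nat (n - 1) *s br (A 0) \<Delta> + br (A 0) \<Delta> = of_nat n *s br (A 0) \<Delta>"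
    using n by (rule scale_of_nat_pred_add)
  ultimately show ?thesis
    by (simp add: algebra_simps)
qed

end

theorem mainTheorem5:
  fixes sc :: "complex \<Rightarrow> 'v::ab_group_add \<Rightarrow> 'v"
    and br :: "'v \<Rightarrow> 'v \<Rightarrow> 'v"
    and scw :: "complex \<Rightarrow> 'w::ab_group_add \<Rightarrow> 'w"
    and res :: "'v \<Rightarrow> 'w"
    and F :: "'v set" and G :: "'w set"
    and n :: nat and A :: "nat \<Rightarrow> 'v" and \<Delta> E :: 'v
  assumes vs: "vector_space sc" and vsw: "vector_space scw"
    and lie: "is_lie_bracket sc br"
    and F_sub: "module.subspace sc F"
    and F_closed: "\<forall>x\<in>F. \<forall>y\<in>F. br x y \<in> F"
    and res_lin: "Vector_Spaces.linear sc scw res"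
    and G_sub: "module.subspace scw G"
    and obstr: "\<forall>A1\<in>F. \<forall>A2\<in>F. res A1 = res A2 \<longrightarrow> res (br A1 A2) \<in> G"
    and n_pos: "1 \<le> n"
    and A_F: "td_in_F F A"
    and A_adm: "admissible sc br res G n A"
    and \<Delta>_F: "\<Delta> \<in> F" and \<Delta>_G: "res \<Delta> \<in> G"
    and E_F: "E \<in> F"
  defines "B \<equiv> (\<lambda>k. A k
                + (if k = n then sc (inverse (fact n)) \<Delta> else 0)
                + (if k = Suc n then sc (inverse (fact (Suc n))) E else 0))"
  shows "(\<forall>m. 1 \<le> m \<and> m \<le> n \<longrightarrow>
            cong_mod_t (n - m + 1) (lie_iter sc br B m)
              (\<lambda>k. lie_iter sc br A m k
                   + (if k = n - m then sc (inverse (fact (n - m))) \<Delta> else 0)))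
       \<and> cong_mod_t 1 (lie_iter sc br B (Suc n))
              (\<lambda>k. lie_iter sc br A (Suc n) k + const_td E k
                   + sc (of_nat n) (td_bracket br A (const_td \<Delta>) k))"
proof -
  interpret lie_algebra sc br
    by (rule lie_algebra.intro[OF vs]) (unfold_locales, fact lie)
  have below: "\<And>i. i < n \<Longrightarrow> B i = A i"
    and at_n: "B n = A n + sc (inverse (fact n)) \<Delta>"
    and at_Suc_n: "B (Suc n) = A (Suc n) + sc (inverse (fact (Suc n))) E"
    by (simp_all add: B_def)
  note low_coeffs = lie_iter_perturb_low_coeffs[OF below at_n at_Suc_n]
  have "cong_mod_t (n - m + 1) (lie_iter sc br B m)
      (\<lambda>k. lie_iter sc br A m k + (if k = n - m then sc (inverse (fact (n - m))) \<Delta> else 0))"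
    if "1 \<le> m \<and> m \<le> n" for m
    using low_coeffs[of m] that by (auto simp: cong_mod_t_def less_Suc_eq)
  moreover have "td_bracket br A (const_td \<Delta>) 0 = br (A 0) \<Delta>"
    by (simp add: td_bracket_def const_td_def)
  ultimately show ?thesis
    using lie_iter_perturb_const_coeff[OF below at_n at_Suc_n n_pos]
    by (simp add: cong_mod_t_def const_td_def)
qed

end
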